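(* Let $A,B:[0,T]\to\mathrm{Sym}(n)$ be continuous with $B(t)$ positive definite and $A(t)$ negative semidefinite for all $t\in[0,T]$, and consider the natural quadratic Hamiltonian $H(t,p,q)=\frac12\big[\langle B(t)p,p\rangle+\langle A(t)q,q\rangle\big]$ on $[0,T]\times\mathbb R^{2n}$. Let $\psi$ be the fundamental solution of the linear Hamiltonian system $z'=J_0\nabla H(t,z)$, i.e. $\psi'=J_0\,\mathrm{diag}(B(t),A(t))\,\psi$, $\psi(0)=\mathrm{Id}$. Let $L_0\in\Lambda(n)$, $\ell(t)=\psi(t)L_0$ and $\mathrm{mul}(t_0)=\dim(\ell(t_0)\cap L_D)$. Then the set of $t_0\in[0,T]$ with $\mathrm{mul}(t_0)>0$ is finite and $$\sum_{t_0\in[0,T]}\mathrm{mul}(t_0)\le n.$$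
   Context: The standard symplectic space is $\mathbb R^{2n}=\mathbb R^n\oplus\mathbb R^n$ with coordinates $z=(p,q)$ ($p$ momentum, $q$ configuration), $\omega_0((p_1,q_1),(p_2,q_2))=\langle p_1,q_2\rangle-\langle q_1,p_2\rangle$, $J_0(p,q)=(-q,p)$ so that $z'=J_0\nabla H$ means $p'=-\nabla_qH$, $q'=\nabla_pH$; $\Lambda(n)$ is the Lagrangian Grassmannian and $L_D=\mathbb R^n\times\{0\}=\{(p,0):p\in\mathbb R^n\}$ is the Dirichlet Lagrangian. $\mathrm{Sym}(n)$ denotes real symmetric $n\times n$ matrices. *)

theory Defs
  imports "HOL-Analysis.Analysis"
begin

text \<open>Phase space R^{2n} = R^n x R^n with z = (p,q).\<close>

definition omega0 :: "((real^'n) \<times> (real^'n)) \<Rightarrow> ((real^'n) \<times> (real^'n)) \<Rightarrow> real" where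
  "omega0 z w = fst z \<bullet> snd w - snd z \<bullet> fst w"

definition J0 :: "((real^'n) \<times> (real^'n)) \<Rightarrow> ((real^'n) \<times> (real^'n))" where
  "J0 z = (- snd z, fst z)"

definition lagrangian :: "((real^'n) \<times> (real^'n)) set \<Rightarrow> bool" where
  "lagrangian L \<longleftrightarrow> subspace L \<and> dim L = CARD('n) \<and>
     (\<forall>z\<in>L. \<forall>w\<in>L. omega0 z w = 0)"

definition L_D :: "((real^'n) \<times> (real^'n)) set" where
  "L_D = {(p, 0) | p. True}"

definition symmetric_mat :: "real^'n^'n \<Rightarrow> bool" where
  "symmetric_mat M \<longleftrightarrow> transpose M = M"

definition pos_def :: "real^'n^'n \<Rightarrow> bool" where
  "pos_def M \<longleftrightarrow> (\<forall>x. x \<noteq> 0 \<longrightarrow> x \<bullet> (M *v x) > 0)"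

definition neg_semidef :: "real^'n^'n \<Rightarrow> bool" where
  "neg_semidef M \<longleftrightarrow> (\<forall>x. x \<bullet> (M *v x) \<le> 0)"

text \<open>Gradient of H(t,p,q) = 1/2 (<B p,p> + <A q,q>) for symmetric A, B:
  grad_p H = B p, grad_q H = A q.\<close>
definition gradH :: "(real \<Rightarrow> real^'n^'n) \<Rightarrow> (real \<Rightarrow> real^'n^'n) \<Rightarrow> real
    \<Rightarrow> ((real^'n) \<times> (real^'n)) \<Rightarrow> ((real^'n) \<times> (real^'n))" where
  "gradH A B t z = (B t *v fst z, A t *v snd z)"

end

theory Submission
  imports Defs
begin

text \<open>
  Along the flow the symplectic form is conserved, and since B is positive definite and
  A negative semidefinite the function t \<mapsto> \<langle>p(t), q(t)\<rangle> is nondecreasing on every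
  trajectory, with strictly positive derivative at a crossing of L_D (where q = 0, p \<noteq> 0).
  Let W(t) be the crossing space of vectors of L0 that the flow maps into L_D at time t.
  Adding crossing times in increasing order, the new space W(b) meets the span of the
  earlier ones only in 0: on W(b) the pairing vanishes at time b, while on the earlier span
  it is already positive. Isotropy of L0 shows that adding an element of W(b) does not
  change the pairing at time b, so positivity propagates. Hence the W(t) form a direct sum
  inside L0 and their dimensions add up to at most dim L0 = n.
\<close>

lemma symmetric_mat_inner_commute:
  assumes "symmetric_mat M"
  shows "(M *v x) \<bullet> y = x \<bullet> (M *v y)"
  using assms by (metis dot_lmul_matrix symmetric_mat_def vector_transpose_matrix)

lemma has_real_derivative_fst_inner_snd:
  fixes f g :: "real \<Rightarrow> 'a::real_inner \<times> 'a"
  assumes f: "(f has_vector_derivative (a, b)) (at t within S)"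
    and g: "(g has_vector_derivative (c, d)) (at t within S)"
  shows "((\<lambda>s. fst (f s) \<bullet> snd (g s)) has_real_derivative a \<bullet> snd (g t) + fst (f t) \<bullet> d)
    (at t within S)"
proof -
  have "((\<lambda>s. fst (f s)) has_derivative (\<lambda>h. h *\<^sub>R a)) (at t within S)"
    using bounded_linear.has_derivative[OF bounded_linear_fst f[unfolded has_vector_derivative_def]]
    by simp
  moreover have "((\<lambda>s. snd (g s)) has_derivative (\<lambda>h. h *\<^sub>R d)) (at t within S)"
    using bounded_linear.has_derivative[OF bounded_linear_snd g[unfolded has_vector_derivative_def]]
    by simp
  ultimately show ?thesis
    unfolding has_field_derivative_def
    by (rule has_derivative_eq_rhs[OF has_derivative_inner]) (auto simp: algebra_simps)
qed

lemma omega0_J0_self: "omega0 z (J0 z) = z \<bullet> z"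
  by (simp add: omega0_def J0_def inner_prod_def)

lemma omega0_preserving_eq_0_imp:
  assumes "\<And>u v. omega0 (f u) (f v) = omega0 u v" and "f w = 0"
  shows "w = 0"
proof -
  have "w \<bullet> w = omega0 (f w) (f (J0 w))"
    by (simp add: assms(1) omega0_J0_self)
  also have "\<dots> = 0"
    by (simp add: assms(2) omega0_def)
  finally show ?thesis by simp
qed

lemma subspace_L_D: "subspace L_D"
  unfolding subspace_def L_D_def by (auto simp: zero_prod_def)

definition pq_pairing :: "'a::real_inner \<times> 'a \<Rightarrow> real" where
  "pq_pairing z = fst z \<bullet> snd z"

lemma pq_pairing_L_D: "z \<in> L_D \<Longrightarrow> pq_pairing z = 0"
  unfolding L_D_def pq_pairing_def by auto

lemma finite_support_sum_le:
  fixes f :: "'a \<Rightarrow> nat"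
  assumes "\<And>S. finite S \<Longrightarrow> S \<subseteq> X \<Longrightarrow> (\<Sum>t\<in>S. f t) \<le> n"
  shows "finite {t \<in> X. 0 < f t} \<and> (\<Sum>t \<in> {t \<in> X. 0 < f t}. f t) \<le> n"
proof -
  have "finite {t \<in> X. 0 < f t}"
  proof (rule ccontr)
    assume "infinite {t \<in> X. 0 < f t}"
    then obtain S where S: "finite S" "card S = Suc n" "S \<subseteq> {t \<in> X. 0 < f t}"
      using infinite_arbitrarily_large by blast
    have "card S = (\<Sum>t\<in>S. 1::nat)" by simp
    also have "\<dots> \<le> (\<Sum>t\<in>S. f t)" using S(3) by (intro sum_mono) auto
    also have "\<dots> \<le> n" using S by (intro assms) auto
    finally show False using S(2) by simp
  qed
  then show ?thesis using assms by auto
qed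

locale linear_hamiltonian_flow =
  fixes A B :: "real \<Rightarrow> real^'n^'n" and T :: real
    and \<psi> :: "real \<Rightarrow> ((real^'n) \<times> (real^'n)) \<Rightarrow> ((real^'n) \<times> (real^'n))"
  assumes symA: "\<And>t. t \<in> {0..T} \<Longrightarrow> symmetric_mat (A t)"
    and symB: "\<And>t. t \<in> {0..T} \<Longrightarrow> symmetric_mat (B t)"
    and lin: "\<And>t. t \<in> {0..T} \<Longrightarrow> linear (\<psi> t)"
    and init: "\<psi> 0 = id"
    and ode: "\<And>t z. t \<in> {0..T} \<Longrightarrow>
       ((\<lambda>s. \<psi> s z) has_vector_derivative J0 (gradH A B t (\<psi> t z))) (at t within {0..T})"
begin

lemma flow_has_derivative:
  assumes "t \<in> {0..T}"
  shows "((\<lambda>s. \<psi> s z) has_vector_derivative (- (A t *v snd (\<psi> t z)), B t *v fst (\<psi> t z)))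
    (at t within {0..T})"
  using ode[OF assms, of z] by (simp add: J0_def gradH_def)

lemma omega0_flow:
  assumes t: "t \<in> {0..T}"
  shows "omega0 (\<psi> t u) (\<psi> t v) = omega0 u v"
proof -
  define h where "h s = fst (\<psi> s u) \<bullet> snd (\<psi> s v) - fst (\<psi> s v) \<bullet> snd (\<psi> s u)" for s
  have "(h has_real_derivative 0) (at x within {0..T})" if x: "x \<in> {0..T}" for x
  proof -
    note D = flow_has_derivative[OF x]
    have "(h has_real_derivative
        (- (A x *v snd (\<psi> x u))) \<bullet> snd (\<psi> x v) + fst (\<psi> x u) \<bullet> (B x *v fst (\<psi> x v))
        - ((- (A x *v snd (\<psi> x v))) \<bullet> snd (\<psi> x u) + fst (\<psi> x v) \<bullet> (B x *v fst (\<psi> x u))))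
        (at x within {0..T})"
      unfolding h_def by (intro DERIV_diff has_real_derivative_fst_inner_snd[OF D D])
    then show ?thesis
      using symmetric_mat_inner_commute[OF symA[OF x], of "snd (\<psi> x u)" "snd (\<psi> x v)"]
        symmetric_mat_inner_commute[OF symB[OF x], of "fst (\<psi> x v)" "fst (\<psi> x u)"]
      by (simp add: inner_commute)
  qed
  then obtain c where "\<forall>x\<in>{0..T}. h x = c"
    using has_field_derivative_zero_constant[of "{0..T}" h] by auto
  then have "h t = h 0" using t by auto
  then show ?thesis using init by (simp add: h_def omega0_def inner_commute)
qed

lemma flow_eq_0_imp:
  "t \<in> {0..T} \<Longrightarrow> \<psi> t w = 0 \<Longrightarrow> w = 0"
  by (rule omega0_preserving_eq_0_imp[of "\<psi> t"]) (auto simp: omega0_flow)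

definition crossing_space :: "((real^'n) \<times> (real^'n)) set \<Rightarrow> real \<Rightarrow> ((real^'n) \<times> (real^'n)) set"
  where "crossing_space L t = {w \<in> L. \<psi> t w \<in> L_D}"

lemma subspace_crossing_space:
  assumes "subspace L" and "t \<in> {0..T}"
  shows "subspace (crossing_space L t)"
proof -
  have "crossing_space L t = L \<inter> \<psi> t -` L_D" unfolding crossing_space_def by auto
  then show ?thesis
    using assms by (simp add: subspace_inter linear_subspace_vimage lin subspace_L_D)
qed

lemma image_inter_L_D_eq_image_crossing_space: "\<psi> t ` L \<inter> L_D = \<psi> t ` crossing_space L t"
  unfolding crossing_space_def by auto

lemma pq_pairing_flow_add_crossing:
  assumes t: "t \<in> {0..T}" and iso: "\<forall>z\<in>L. \<forall>w\<in>L. omega0 z w = 0"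
    and u: "u \<in> L" and c: "c \<in> crossing_space L t"
  shows "pq_pairing (\<psi> t (u + c)) = pq_pairing (\<psi> t u)"
proof -
  obtain p where p: "\<psi> t c = (p, 0)" using c unfolding crossing_space_def L_D_def by auto
  have "omega0 (\<psi> t c) (\<psi> t u) = 0"
    using c u iso by (simp add: omega0_flow[OF t] crossing_space_def)
  then have "p \<bullet> snd (\<psi> t u) = 0" using p by (simp add: omega0_def)
  moreover have "\<psi> t (u + c) = \<psi> t u + \<psi> t c" using lin[OF t] by (simp add: linear_add)
  ultimately show ?thesis using p by (simp add: pq_pairing_def inner_add_left)
qed

end

locale natural_hamiltonian_flow = linear_hamiltonian_flow +
  assumes posB: "\<And>t. t \<in> {0..T} \<Longrightarrow> pos_def (B t)"
    and negA: "\<And>t. t \<in> {0..T} \<Longrightarrow> neg_semidef (A t)"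
begin

definition pq_rate where
  "pq_rate t z = fst z \<bullet> (B t *v fst z) - snd z \<bullet> (A t *v snd z)"

lemma pq_rate_nonneg:
  assumes "t \<in> {0..T}"
  shows "0 \<le> pq_rate t z"
proof -
  have "0 \<le> fst z \<bullet> (B t *v fst z)"
    using posB[OF assms] by (cases "fst z = 0") (auto simp: pos_def_def less_imp_le)
  moreover have "snd z \<bullet> (A t *v snd z) \<le> 0"
    using negA[OF assms] by (simp add: neg_semidef_def)
  ultimately show ?thesis by (simp add: pq_rate_def)
qed

lemma pq_rate_pos_L_D:
  assumes "t \<in> {0..T}" "z \<in> L_D" "z \<noteq> 0"
  shows "0 < pq_rate t z"
proof -
  obtain p where z: "z = (p, 0)" using assms(2) by (auto simp: L_D_def)
  then have "p \<noteq> 0" using assms(3) by (simp add: zero_prod_def)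
  then show ?thesis using posB[OF assms(1)] by (simp add: z pq_rate_def pos_def_def)
qed

lemma pq_pairing_flow_has_derivative:
  assumes "x \<in> {0..T}"
  shows "((\<lambda>s. pq_pairing (\<psi> s w)) has_real_derivative pq_rate x (\<psi> x w)) (at x within {0..T})"
  unfolding pq_pairing_def pq_rate_def
  using has_real_derivative_fst_inner_snd[OF flow_has_derivative[OF assms] flow_has_derivative[OF assms]]
  by (simp add: inner_commute)

lemma pq_pairing_flow_mono:
  assumes "t \<in> {0..T}" "s \<in> {0..T}" "t \<le> s"
  shows "pq_pairing (\<psi> t w) \<le> pq_pairing (\<psi> s w)"
proof (rule DERIV_nonneg_imp_increasing_open[OF \<open>t \<le> s\<close>])
  fix x assume "t < x" "x < s"
  then have xi: "x \<in> interior {0..T}" using assms by auto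
  then have x: "x \<in> {0..T}" using interior_subset by blast
  have "((\<lambda>s. pq_pairing (\<psi> s w)) has_real_derivative pq_rate x (\<psi> x w)) (at x)"
    using pq_pairing_flow_has_derivative[OF x] by (simp add: at_within_interior[OF xi])
  then show "\<exists>D. ((\<lambda>s. pq_pairing (\<psi> s w)) has_real_derivative D) (at x) \<and> 0 \<le> D"
    using pq_rate_nonneg[OF x] by blast
next
  have "continuous_on {0..T} (\<lambda>s. pq_pairing (\<psi> s w))"
    by (rule DERIV_continuous_on[OF pq_pairing_flow_has_derivative])
  then show "continuous_on {t..s} (\<lambda>s. pq_pairing (\<psi> s w))"
    by (rule continuous_on_subset) (use assms in auto)
qed

lemma pq_pairing_flow_pos_after_crossing:
  assumes b: "b \<in> {0..T}" and s: "s \<in> {0..T}" and "b < s"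
    and crossing: "\<psi> b w \<in> L_D" and "w \<noteq> 0"
  shows "0 < pq_pairing (\<psi> s w)"
proof -
  have "\<psi> b w \<noteq> 0" using flow_eq_0_imp[OF b] \<open>w \<noteq> 0\<close> by blast
  then have "0 < pq_rate b (\<psi> b w)" using pq_rate_pos_L_D[OF b crossing] by simp
  then obtain d where "d > 0"
    and d: "\<And>h. 0 < h \<Longrightarrow> b + h \<in> {0..T} \<Longrightarrow> h < d
              \<Longrightarrow> pq_pairing (\<psi> b w) < pq_pairing (\<psi> (b + h) w)"
    using has_real_derivative_pos_inc_right[OF pq_pairing_flow_has_derivative[OF b]] by blast
  define h where "h = min (d / 2) (s - b)"
  have h: "0 < h" "h < d" "b + h \<in> {0..T}" "b + h \<le> s"
    using \<open>d > 0\<close> \<open>b < s\<close> b s by (auto simp: h_def)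
  have "0 = pq_pairing (\<psi> b w)" using pq_pairing_L_D[OF crossing] by simp
  also have "\<dots> < pq_pairing (\<psi> (b + h) w)" using d h by blast
  also have "\<dots> \<le> pq_pairing (\<psi> s w)" using pq_pairing_flow_mono h s by blast
  finally show ?thesis .
qed

lemma inter_crossing_space_trivial:
  assumes "\<And>w. w \<in> U \<Longrightarrow> w \<noteq> 0 \<Longrightarrow> 0 < pq_pairing (\<psi> b w)"
  shows "U \<inter> crossing_space L b \<subseteq> {0}"
proof
  fix w assume w: "w \<in> U \<inter> crossing_space L b"
  then have "pq_pairing (\<psi> b w) = 0" by (simp add: crossing_space_def pq_pairing_L_D)
  then show "w \<in> {0}" using assms[of w] w by (cases "w = 0") auto
qed

lemma pq_pairing_pos_after_add_crossing:
  assumes b: "b \<in> {0..T}" and iso: "\<forall>z\<in>L. \<forall>w\<in>L. omega0 z w = 0"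
    and pos: "\<And>w. w \<in> U \<Longrightarrow> w \<noteq> 0 \<Longrightarrow> 0 < pq_pairing (\<psi> b w)"
    and "U \<subseteq> L" and u: "u \<in> U" and c: "c \<in> crossing_space L b" and "u + c \<noteq> 0"
    and s: "s \<in> {0..T}" and "b < s"
  shows "0 < pq_pairing (\<psi> s (u + c))"
proof (cases "u = 0")
  case True
  then show ?thesis
    using pq_pairing_flow_pos_after_crossing[OF b s \<open>b < s\<close>, of c] c \<open>u + c \<noteq> 0\<close>
    by (simp add: crossing_space_def)
next
  case False
  have "0 < pq_pairing (\<psi> b u)" using pos[OF u False] .
  also have "\<dots> = pq_pairing (\<psi> b (u + c))"
    using pq_pairing_flow_add_crossing[OF b iso _ c, of u] u \<open>U \<subseteq> L\<close> by auto
  also have "\<dots> \<le> pq_pairing (\<psi> s (u + c))"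
    using pq_pairing_flow_mono[OF b s] \<open>b < s\<close> by simp
  finally show ?thesis .
qed

lemma crossing_spaces_direct_sum:
  assumes L: "subspace L" and iso: "\<forall>z\<in>L. \<forall>w\<in>L. omega0 z w = 0"
    and "finite S" and "S \<subseteq> {0..T}"
  shows "dim (span (\<Union>t\<in>S. crossing_space L t)) = (\<Sum>t\<in>S. dim (crossing_space L t)) \<and>
    (\<forall>w \<in> span (\<Union>t\<in>S. crossing_space L t). w \<noteq> 0 \<longrightarrow>
       (\<forall>s\<in>{0..T}. (\<forall>t\<in>S. t < s) \<longrightarrow> 0 < pq_pairing (\<psi> s w)))"
  using \<open>finite S\<close> \<open>S \<subseteq> {0..T}\<close>
proof (induction S rule: finite_linorder_max_induct)
  case empty
  then show ?case by simp
next
  case (insert b S)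
  define U where "U = span (\<Union>t\<in>S. crossing_space L t)"
  define W where "W = crossing_space L b"
  have b: "b \<in> {0..T}" using insert.prems by auto
  have subW: "subspace W" unfolding W_def using subspace_crossing_space[OF L b] .
  have UL: "U \<subseteq> L"
    unfolding U_def using L by (intro span_minimal) (auto simp: crossing_space_def)
  have IH_dim: "dim U = (\<Sum>t\<in>S. dim (crossing_space L t))"
    and IH_pos: "\<And>w. w \<in> U \<Longrightarrow> w \<noteq> 0 \<Longrightarrow> 0 < pq_pairing (\<psi> b w)"
    using insert.IH insert.prems insert.hyps(2) b unfolding U_def by auto
  have "span (\<Union>t\<in>insert b S. crossing_space L t) = span ((\<Union>t\<in>S. crossing_space L t) \<union> W)"
    by (simp add: W_def Un_commute)
  also have "\<dots> = {u + c | u c. u \<in> U \<and> c \<in> span W}"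
    unfolding U_def by (rule span_Un)
  also have "span W = W" using subW by (simp add: span_eq_iff)
  finally have span_insert:
    "span (\<Union>t\<in>insert b S. crossing_space L t) = {u + c | u c. u \<in> U \<and> c \<in> W}" .
  have "dim (U \<inter> W) = 0"
    using dim_subset[OF inter_crossing_space_trivial[OF IH_pos]] by (simp add: W_def)
  moreover have "dim {u + c | u c. u \<in> U \<and> c \<in> W} + dim (U \<inter> W) = dim U + dim W"
    using subW by (intro dim_sums_Int) (simp_all add: U_def)
  ultimately have "dim (span (\<Union>t\<in>insert b S. crossing_space L t)) = dim U + dim W"
    unfolding span_insert by linarith
  then have "dim (span (\<Union>t\<in>insert b S. crossing_space L t))
      = (\<Sum>t\<in>insert b S. dim (crossing_space L t))"
    using IH_dim insert.hyps by (auto simp: W_def)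
  moreover have "0 < pq_pairing (\<psi> s (u + c))"
    if "u \<in> U" "c \<in> W" "u + c \<noteq> 0" "s \<in> {0..T}" "\<forall>t\<in>insert b S. t < s" for u c s
    using pq_pairing_pos_after_add_crossing[OF b iso IH_pos UL] that by (simp add: W_def)
  ultimately show ?case unfolding span_insert by blast
qed

lemma sum_dim_crossings_le:
  assumes L: "subspace L" and iso: "\<forall>z\<in>L. \<forall>w\<in>L. omega0 z w = 0"
    and S: "finite S" "S \<subseteq> {0..T}"
  shows "(\<Sum>t\<in>S. dim (\<psi> t ` L \<inter> L_D)) \<le> dim L"
proof -
  have "(\<Sum>t\<in>S. dim (\<psi> t ` L \<inter> L_D)) \<le> (\<Sum>t\<in>S. dim (crossing_space L t))"
    using S by (intro sum_mono)
      (metis dim_image_le image_inter_L_D_eq_image_crossing_space lin subsetD)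
  also have "\<dots> = dim (span (\<Union>t\<in>S. crossing_space L t))"
    using crossing_spaces_direct_sum[OF L iso S] by simp
  also have "\<dots> \<le> dim L"
    using L by (intro dim_subset span_minimal) (auto simp: crossing_space_def)
  finally show ?thesis .
qed

end

theorem theorem3p9:
  fixes A B :: "real \<Rightarrow> real^'n^'n" and T :: real
    and \<psi> :: "real \<Rightarrow> ((real^'n) \<times> (real^'n)) \<Rightarrow> ((real^'n) \<times> (real^'n))"
    and L0 :: "((real^'n) \<times> (real^'n)) set"
  assumes contA: "continuous_on {0..T} A" and contB: "continuous_on {0..T} B"
    and symA: "\<And>t. t \<in> {0..T} \<Longrightarrow> symmetric_mat (A t)"
    and symB: "\<And>t. t \<in> {0..T} \<Longrightarrow> symmetric_mat (B t)"
    and posB: "\<And>t. t \<in> {0..T} \<Longrightarrow> pos_def (B t)"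
    and negA: "\<And>t. t \<in> {0..T} \<Longrightarrow> neg_semidef (A t)"
    and lin: "\<And>t. t \<in> {0..T} \<Longrightarrow> linear (\<psi> t)"
    and init: "\<psi> 0 = id"
    and ode: "\<And>t z. t \<in> {0..T} \<Longrightarrow>
       ((\<lambda>s. \<psi> s z) has_vector_derivative J0 (gradH A B t (\<psi> t z))) (at t within {0..T})"
    and L0: "lagrangian L0"
  shows "finite {t \<in> {0..T}. dim (\<psi> t ` L0 \<inter> L_D) > 0} \<and>
         (\<Sum>t \<in> {t \<in> {0..T}. dim (\<psi> t ` L0 \<inter> L_D) > 0}. dim (\<psi> t ` L0 \<inter> L_D)) \<le> CARD('n)"
proof -
  interpret natural_hamiltonian_flow A B T \<psi>
    using symA symB lin init ode posB negA
    by (simp add: natural_hamiltonian_flow_def linear_hamiltonian_flow_def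
        natural_hamiltonian_flow_axioms_def)
  have "subspace L0" "dim L0 = CARD('n)" "\<forall>z\<in>L0. \<forall>w\<in>L0. omega0 z w = 0"
    using L0 unfolding lagrangian_def by auto
  then show ?thesis
    using sum_dim_crossings_le[of L0] by (intro finite_support_sum_le) auto
qed

end
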